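(* Let $\nu$ be a non-degenerate probability measure on $\mathbb{R}$ with support bounded from above and suppose $A(\nu)=\sup\operatorname{supp}(\nu)<0$. For $\theta\in\Theta=\left(-\infty,\frac{1}{A(\nu)}\right)\cup(0,\infty)$ let $M(\theta)=\int\frac{1}{1-\theta x}\nu(dx)$, $P_\theta(dx)=\frac{1}{M(\theta)(1-\theta x)}\nu(dx)$ and $$k(\theta)=\int x\,P_\theta(dx)=\frac{M(\theta)-1}{\theta M(\theta)}.$$ Then $k$ is strictly increasing on $(0,\infty)$ and on $\left(-\infty,\frac{1}{A(\nu)}\right)$. *)

theory Defs
  imports "HOL-Probability.Probability"
begin

text \<open>Support of a measure on the reals: points all of whose open neighbourhoods
  have positive measure (the smallest closed set of full measure).\<close>
definition msupp :: "real measure \<Rightarrow> real set" where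
  "msupp \<nu> = {x. \<forall>e>0. emeasure \<nu> (ball x e) > 0}"

definition nondegenerate :: "real measure \<Rightarrow> bool" where
  "nondegenerate \<nu> \<longleftrightarrow> (\<forall>a. \<nu> \<noteq> return borel a)"

definition A_sup :: "real measure \<Rightarrow> real" where
  "A_sup \<nu> = Sup (msupp \<nu>)"

definition M_fun :: "real measure \<Rightarrow> real \<Rightarrow> real" where
  "M_fun \<nu> \<theta> = (\<integral>x. 1 / (1 - \<theta> * x) \<partial>\<nu>)"

definition k_fun :: "real measure \<Rightarrow> real \<Rightarrow> real" where
  "k_fun \<nu> \<theta> = (\<integral>x. x / (M_fun \<nu> \<theta> * (1 - \<theta> * x)) \<partial>\<nu>)"

end

theory Submission
  imports Defs
begin

text \<open>
  Up to a common sign, \<open>k(\<theta>)\<close> is the mean of \<open>x\<close> under the positive weights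
  \<open>w\<^sub>\<theta>(x) = \<plusminus>1 / (1 - \<theta> x)\<close> on the support \<open>\<subseteq> (-\<infinity>, A]\<close>. For \<open>\<theta>\<^sub>1 < \<theta>\<^sub>2\<close> in the same
  component of \<open>\<Theta>\<close>, the likelihood ratio \<open>\<rho> = w\<^sub>\<theta>\<^sub>2 / w\<^sub>\<theta>\<^sub>1 = (1 - \<theta>\<^sub>1 x) / (1 - \<theta>\<^sub>2 x)\<close> is strictly
  increasing on \<open>(-\<infinity>, A]\<close>. Reweighting by an increasing ratio raises the mean: if \<open>c\<close> is
  the \<open>w\<^sub>\<theta>\<^sub>1\<close>-mean, then \<open>\<integral>(x - c) w\<^sub>\<theta>\<^sub>2 = \<integral>(x - c)(\<rho>(x) - \<rho>(c)) w\<^sub>\<theta>\<^sub>1\<close>, whose integrand is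
  nonnegative and vanishes only at \<open>x = c\<close>, so it is positive for non-degenerate \<open>\<nu>\<close>.
\<close>

lemma AE_in_msupp:
  fixes \<nu> :: "real measure"
  assumes sets: "sets \<nu> = sets borel"
  shows "AE x in \<nu>. x \<in> msupp \<nu>"
proof -
  define \<F> where "\<F> = {U. open U \<and> emeasure \<nu> U = 0}"
  obtain \<F>' where \<F>': "\<F>' \<subseteq> \<F>" "countable \<F>'" "\<Union>\<F>' = \<Union>\<F>"
    using Lindelof[of \<F>] unfolding \<F>_def by blast
  have "U \<in> null_sets \<nu>" if "U \<in> \<F>'" for U
  proof -
    have "open U" "emeasure \<nu> U = 0" using that \<F>'(1) unfolding \<F>_def by auto
    then show ?thesis using borel_open[of U] sets by (intro null_setsI) auto
  qed
  then have "\<Union>\<F> \<in> null_sets \<nu>"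
    using null_sets_UN'[OF \<F>'(2), of id] \<F>'(3) by simp
  moreover have "{x \<in> space \<nu>. x \<notin> msupp \<nu>} \<subseteq> \<Union>\<F>"
  proof
    fix x assume "x \<in> {x \<in> space \<nu>. x \<notin> msupp \<nu>}"
    then obtain e where "e > 0" "emeasure \<nu> (ball x e) = 0"
      unfolding msupp_def by auto
    then show "x \<in> \<Union>\<F>" unfolding \<F>_def using open_ball[of x e] centre_in_ball[of x e] by blast
  qed
  ultimately show ?thesis by (rule AE_I')
qed

lemma AE_le_A_sup:
  fixes \<nu> :: "real measure"
  assumes "sets \<nu> = sets borel" and "bdd_above (msupp \<nu>)"
  shows "AE x in \<nu>. x \<le> A_sup \<nu>"
  using AE_in_msupp[OF assms(1)] by eventually_elim (use assms(2) in \<open>auto simp: A_sup_def cSup_upper\<close>)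

lemma nondegenerate_not_AE_eq:
  fixes \<nu> :: "real measure"
  assumes "prob_space \<nu>" and sets: "sets \<nu> = sets borel" and "nondegenerate \<nu>"
  shows "\<not> (AE x in \<nu>. x = c)"
proof
  assume ae: "AE x in \<nu>. x = c"
  interpret prob_space \<nu> by fact
  have "emeasure \<nu> S = emeasure (return borel c) S" if S: "S \<in> sets \<nu>" for S
  proof (cases "c \<in> S")
    case True
    have "emeasure \<nu> S = emeasure \<nu> (space \<nu>)"
      using ae S True by (intro emeasure_eq_AE) auto
    also have "\<dots> = 1" by (rule emeasure_space_1)
    also have "\<dots> = emeasure (return borel c) S" using True S sets by simp
    finally show ?thesis .
  next
    case False
    then have "emeasure \<nu> S = emeasure \<nu> {}"
      using ae S by (intro emeasure_eq_AE) auto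
    then show ?thesis using False S sets by simp
  qed
  then have "\<nu> = return borel c" using sets by (intro measure_eqI) auto
  then show False using \<open>nondegenerate \<nu>\<close> unfolding nondegenerate_def by blast
qed

lemma weighted_mean_less:
  fixes \<nu> :: "real measure" and w1 w2 :: "real \<Rightarrow> real" and A :: real
  assumes "prob_space \<nu>" and nonconst: "\<And>c. \<not> (AE x in \<nu>. x = c)"
    and le_A: "AE x in \<nu>. x \<le> A"
    and pos1: "\<And>x. x \<le> A \<Longrightarrow> w1 x > 0" and pos2: "\<And>x. x \<le> A \<Longrightarrow> w2 x > 0"
    and ratio: "strict_mono_on {..A} (\<lambda>x. w2 x / w1 x)"
    and int1: "integrable \<nu> w1" "integrable \<nu> (\<lambda>x. x * w1 x)"
    and int2: "integrable \<nu> w2" "integrable \<nu> (\<lambda>x. x * w2 x)"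
  shows "(\<integral>x. x * w1 x \<partial>\<nu>) / (\<integral>x. w1 x \<partial>\<nu>) < (\<integral>x. x * w2 x \<partial>\<nu>) / (\<integral>x. w2 x \<partial>\<nu>)"
proof -
  interpret prob_space \<nu> by fact
  define \<rho> where "\<rho> x = w2 x / w1 x" for x
  define c where "c = (\<integral>x. x * w1 x \<partial>\<nu>) / (\<integral>x. w1 x \<partial>\<nu>)"
  have space_pos: "emeasure \<nu> (space \<nu>) \<noteq> 0"
    by (simp add: emeasure_space_1)
  have M_pos: "integral\<^sup>L \<nu> w > 0" if "integrable \<nu> w" "\<And>x. x \<le> A \<Longrightarrow> w x > 0" for w :: "real \<Rightarrow> real"
  proof -
    have "AE x in \<nu>. 0 < w x"
      using le_A by eventually_elim (rule that(2))
    from this have "(\<integral>x. 0 \<partial>\<nu>) < integral\<^sup>L \<nu> w"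
      by (rule integral_less_AE_space[OF integrable_zero that(1) _ space_pos])
    then show ?thesis by simp
  qed
  have M1: "integral\<^sup>L \<nu> w1 > 0" and M2: "integral\<^sup>L \<nu> w2 > 0"
    using M_pos[OF int1(1) pos1] M_pos[OF int2(1) pos2] by auto
  have X1: "(\<integral>x. x * w1 x \<partial>\<nu>) = c * integral\<^sup>L \<nu> w1"
    using M1 unfolding c_def by simp
  have "(\<integral>x. x * w1 x \<partial>\<nu>) \<le> (\<integral>x. A * w1 x \<partial>\<nu>)"
  proof (rule integral_mono_AE)
    show "AE x in \<nu>. x * w1 x \<le> A * w1 x"
      using le_A by eventually_elim (simp add: mult_right_mono less_imp_le pos1)
  qed (use int1 in auto)
  then have c_le_A: "c \<le> A"
    using M1 unfolding c_def by (simp add: divide_le_eq)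
  define D where "D x = (x - c) * w2 x - \<rho> c * ((x - c) * w1 x)" for x
  have D_int: "integrable \<nu> D"
    unfolding D_def using int1 int2 by (simp add: left_diff_distrib)
  have ratio_sign: "(x - c) * (\<rho> x - \<rho> c) > 0" if "x \<le> A" "x \<noteq> c" for x
  proof (cases "x < c")
    case True
    then have "\<rho> x < \<rho> c"
      using ratio that(1) c_le_A unfolding \<rho>_def by (auto intro: strict_mono_onD)
    then show ?thesis using True by (simp add: mult_neg_neg)
  next
    case False
    then have "c < x" using that(2) by simp
    then have "\<rho> c < \<rho> x"
      using ratio that(1) c_le_A unfolding \<rho>_def by (auto intro: strict_mono_onD)
    then show ?thesis using \<open>c < x\<close> by simp
  qed
  have D_eq: "D x = w1 x * ((x - c) * (\<rho> x - \<rho> c))" if "x \<le> A" for x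
  proof -
    have "w2 x = \<rho> x * w1 x" using pos1[OF that] unfolding \<rho>_def by simp
    then show ?thesis unfolding D_def by (simp add: algebra_simps)
  qed
  have D_pos: "D x > 0" if "x \<le> A" "x \<noteq> c" for x
    using D_eq[OF that(1)] pos1[OF that(1)] ratio_sign[OF that] by simp
  have D_nonneg: "AE x in \<nu>. D x \<ge> 0"
    using le_A by eventually_elim (use D_eq D_pos in \<open>cases "x = c"; force\<close>)
  have "integral\<^sup>L \<nu> D \<noteq> 0"
  proof
    assume "integral\<^sup>L \<nu> D = 0"
    then have "AE x in \<nu>. D x = 0"
      using integral_nonneg_eq_0_iff_AE[OF D_int D_nonneg] by simp
    then have "AE x in \<nu>. x = c"
      using le_A by eventually_elim (metis D_pos less_irrefl)
    then show False using nonconst by blast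
  qed
  then have "integral\<^sup>L \<nu> D > 0"
    using integral_nonneg_AE[OF D_nonneg] by linarith
  also have "integral\<^sup>L \<nu> D = (\<integral>x. x * w2 x \<partial>\<nu>) - c * integral\<^sup>L \<nu> w2"
    unfolding D_def using int1 int2 X1 by (simp add: left_diff_distrib)
  finally have "c * integral\<^sup>L \<nu> w2 < (\<integral>x. x * w2 x \<partial>\<nu>)" by simp
  then show ?thesis
    using M2 unfolding c_def[symmetric] by (simp add: pos_less_divide_eq)
qed

lemma affine_ratio_strict_mono_on:
  fixes a b s :: real and S :: "real set"
  assumes "a < b" and pos: "\<And>x. x \<in> S \<Longrightarrow> 0 < s * (1 - b * x)"
  shows "strict_mono_on S (\<lambda>x. (1 - a * x) / (1 - b * x))"
proof (rule strict_mono_onI)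
  fix x y assume "x \<in> S" "y \<in> S" "x < y"
  have "0 < (s * s) * ((1 - b * x) * (1 - b * y))"
    using mult_pos_pos[OF pos[OF \<open>x \<in> S\<close>] pos[OF \<open>y \<in> S\<close>]] by (simp add: ac_simps)
  then have pq: "0 < (1 - b * x) * (1 - b * y)"
    using zero_less_mult_iff not_square_less_zero by blast
  then have p: "1 - b * x \<noteq> 0" and q: "1 - b * y \<noteq> 0" by auto
  have "(1 - a * y) / (1 - b * y) - (1 - a * x) / (1 - b * x)
      = ((1 - a * y) * (1 - b * x) - (1 - a * x) * (1 - b * y)) / ((1 - b * y) * (1 - b * x))"
    by (rule diff_frac_eq[OF q p])
  also have "(1 - a * y) * (1 - b * x) - (1 - a * x) * (1 - b * y) = (b - a) * (y - x)"
    by (simp add: algebra_simps)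
  also have "(b - a) * (y - x) / ((1 - b * y) * (1 - b * x)) > 0"
    using \<open>a < b\<close> \<open>x < y\<close> pq by (simp add: mult.commute)
  finally show "(1 - a * x) / (1 - b * x) < (1 - a * y) / (1 - b * y)" by simp
qed

lemma
  fixes \<nu> :: "real measure" and \<theta> A d :: real
  assumes "finite_measure \<nu>" and sets: "sets \<nu> = sets borel" and le_A: "AE x in \<nu>. x \<le> A"
    and "d > 0" and bound: "\<And>x. x \<le> A \<Longrightarrow> d \<le> \<bar>1 - \<theta> * x\<bar>"
  shows integrable_inverse_affine: "integrable \<nu> (\<lambda>x. 1 / (1 - \<theta> * x))"
    and integrable_divide_affine: "\<theta> \<noteq> 0 \<Longrightarrow> integrable \<nu> (\<lambda>x. x / (1 - \<theta> * x))"
proof -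
  interpret finite_measure \<nu> by fact
  have meas: "f \<in> borel_measurable \<nu>" if "f \<in> borel_measurable borel" for f :: "real \<Rightarrow> real"
    using that unfolding measurable_cong_sets[OF sets refl, of borel] .
  show int: "integrable \<nu> (\<lambda>x. 1 / (1 - \<theta> * x))"
  proof (rule Bochner_Integration.integrable_bound[of _ "\<lambda>_. 1 / d"])
    show "(\<lambda>x. 1 / (1 - \<theta> * x)) \<in> borel_measurable \<nu>"
      by (intro meas) measurable
    show "AE x in \<nu>. norm (1 / (1 - \<theta> * x)) \<le> norm (1 / d)"
      using le_A
    proof eventually_elim
      case (elim x)
      have "1 / \<bar>1 - \<theta> * x\<bar> \<le> 1 / d"
        using bound[OF elim] \<open>d > 0\<close> by (intro frac_le) auto
      then show ?case using \<open>d > 0\<close> by simp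
    qed
  qed simp
  assume "\<theta> \<noteq> 0"
  have "AE x in \<nu>. (1 / (1 - \<theta> * x) - 1) / \<theta> = x / (1 - \<theta> * x)"
  proof (rule AE_mp[OF le_A], intro AE_I2 impI)
    fix x assume "x \<le> A"
    then have "1 - \<theta> * x \<noteq> 0" using bound[of x] \<open>d > 0\<close> by auto
    then show "(1 / (1 - \<theta> * x) - 1) / \<theta> = x / (1 - \<theta> * x)"
      using \<open>\<theta> \<noteq> 0\<close> by (simp add: field_simps)
  qed
  moreover have "integrable \<nu> (\<lambda>x. (1 / (1 - \<theta> * x) - 1) / \<theta>)"
    using int by simp
  moreover have "(\<lambda>x. x / (1 - \<theta> * x)) \<in> borel_measurable \<nu>"
    by (intro meas) measurable
  ultimately show "integrable \<nu> (\<lambda>x. x / (1 - \<theta> * x))"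
    using integrable_cong_AE_imp by blast
qed

lemma k_fun_eq_weighted_mean:
  fixes \<nu> :: "real measure" and \<theta> s :: real
  assumes "s \<noteq> 0"
  shows "k_fun \<nu> \<theta> = (\<integral>x. x * (s / (1 - \<theta> * x)) \<partial>\<nu>) / (\<integral>x. s / (1 - \<theta> * x) \<partial>\<nu>)"
proof -
  have "k_fun \<nu> \<theta> = (\<integral>x. x / (1 - \<theta> * x) / M_fun \<nu> \<theta> \<partial>\<nu>)"
    unfolding k_fun_def by (simp add: mult.commute)
  also have "\<dots> = (\<integral>x. x / (1 - \<theta> * x) \<partial>\<nu>) / M_fun \<nu> \<theta>"
    by (rule integral_divide_zero)
  also have "\<dots> = (s * \<integral>x. x / (1 - \<theta> * x) \<partial>\<nu>) / (s * M_fun \<nu> \<theta>)"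
    using assms by simp
  also have "\<dots> = (\<integral>x. x * (s / (1 - \<theta> * x)) \<partial>\<nu>) / (\<integral>x. s / (1 - \<theta> * x) \<partial>\<nu>)"
    unfolding M_fun_def integral_mult_right_zero[symmetric] by (simp add: ac_simps)
  finally show ?thesis .
qed

lemma k_fun_strict_mono_on:
  fixes \<nu> :: "real measure" and I :: "real set" and s A :: real
  assumes P: "prob_space \<nu>" and sets: "sets \<nu> = sets borel"
    and nonconst: "\<And>c. \<not> (AE x in \<nu>. x = c)" and le_A: "AE x in \<nu>. x \<le> A"
    and "0 \<notin> I" and bound: "\<And>\<theta>. \<theta> \<in> I \<Longrightarrow> \<exists>d>0. \<forall>x\<le>A. d \<le> s * (1 - \<theta> * x)"
  shows "strict_mono_on I (k_fun \<nu>)"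
proof (rule strict_mono_onI)
  fix \<theta>1 \<theta>2 assume \<theta>1: "\<theta>1 \<in> I" and \<theta>2: "\<theta>2 \<in> I" and "\<theta>1 < \<theta>2"
  have pos: "0 < s * (1 - \<theta> * x)" if "\<theta> \<in> I" "x \<le> A" for \<theta> x
    using bound[OF that(1)] that(2) by force
  then have "s \<noteq> 0" using \<theta>1 by fastforce
  define w where "w \<theta> x = s / (1 - \<theta> * x)" for \<theta> x
  have w_pos: "0 < w \<theta> x" if "\<theta> \<in> I" "x \<le> A" for \<theta> x
    using pos[OF that] unfolding w_def by (auto simp: zero_less_divide_iff zero_less_mult_iff)
  have w_int: "integrable \<nu> (w \<theta>)" "integrable \<nu> (\<lambda>x. x * w \<theta> x)" if \<theta>: "\<theta> \<in> I" for \<theta>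
  proof -
    obtain d where "d > 0" and d: "\<forall>x\<le>A. d \<le> s * (1 - \<theta> * x)"
      using bound[OF \<theta>] by blast
    have d_pos: "0 < d / \<bar>s\<bar>" using \<open>d > 0\<close> \<open>s \<noteq> 0\<close> by simp
    have d_bound: "d / \<bar>s\<bar> \<le> \<bar>1 - \<theta> * x\<bar>" if "x \<le> A" for x
    proof -
      have "d \<le> \<bar>1 - \<theta> * x\<bar> * \<bar>s\<bar>"
        using d that abs_ge_self[of "s * (1 - \<theta> * x)"] by (auto simp: abs_mult mult.commute)
      then show ?thesis using \<open>s \<noteq> 0\<close> by (simp add: pos_divide_le_eq)
    qed
    have "\<theta> \<noteq> 0" using \<theta> \<open>0 \<notin> I\<close> by blast
    have fin: "finite_measure \<nu>" using P by (simp add: prob_space_def)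
    have "integrable \<nu> (\<lambda>x. 1 / (1 - \<theta> * x))"
      by (rule integrable_inverse_affine[OF fin sets le_A d_pos]) (rule d_bound)
    moreover have "integrable \<nu> (\<lambda>x. x / (1 - \<theta> * x))"
      by (rule integrable_divide_affine[OF fin sets le_A d_pos _ \<open>\<theta> \<noteq> 0\<close>]) (rule d_bound)
    moreover have "w \<theta> = (\<lambda>x. 1 / (1 - \<theta> * x) * s)" "(\<lambda>x. x * w \<theta> x) = (\<lambda>x. x / (1 - \<theta> * x) * s)"
      unfolding w_def by auto
    ultimately show "integrable \<nu> (w \<theta>)" "integrable \<nu> (\<lambda>x. x * w \<theta> x)"
      by (simp_all only: integrable_mult_right_iff simp_thms)
  qed
  have "strict_mono_on {..A} (\<lambda>x. (1 - \<theta>1 * x) / (1 - \<theta>2 * x))"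
    using \<open>\<theta>1 < \<theta>2\<close> pos[OF \<theta>2] by (intro affine_ratio_strict_mono_on) auto
  moreover have "w \<theta>2 x / w \<theta>1 x = (1 - \<theta>1 * x) / (1 - \<theta>2 * x)" if "x \<le> A" for x
    using pos[OF \<theta>1 that] \<open>s \<noteq> 0\<close> unfolding w_def by auto
  ultimately have ratio: "strict_mono_on {..A} (\<lambda>x. w \<theta>2 x / w \<theta>1 x)"
    by (simp add: strict_mono_on_def)
  show "k_fun \<nu> \<theta>1 < k_fun \<nu> \<theta>2"
    using weighted_mean_less[OF P nonconst le_A w_pos[OF \<theta>1] w_pos[OF \<theta>2] ratio
        w_int[OF \<theta>1] w_int[OF \<theta>2]]
    unfolding k_fun_eq_weighted_mean[OF \<open>s \<noteq> 0\<close>, of \<nu> \<theta>1] k_fun_eq_weighted_mean[OF \<open>s \<noteq> 0\<close>, of \<nu> \<theta>2] w_def .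
qed

theorem proposition3p5:
  fixes \<nu> :: "real measure"
  assumes "prob_space \<nu>"
    and "sets \<nu> = sets borel"
    and "nondegenerate \<nu>"
    and "bdd_above (msupp \<nu>)"
    and "A_sup \<nu> < 0"
  shows "strict_mono_on {0<..} (k_fun \<nu>) \<and>
         strict_mono_on {..<1 / A_sup \<nu>} (k_fun \<nu>)"
proof
  define A where "A = A_sup \<nu>"
  have "A < 0" using assms(5) unfolding A_def .
  have le_A: "AE x in \<nu>. x \<le> A"
    unfolding A_def using AE_le_A_sup[OF assms(2,4)] .
  note k_mono = k_fun_strict_mono_on[OF assms(1,2) nondegenerate_not_AE_eq[OF assms(1-3)] le_A]
  show "strict_mono_on {0<..} (k_fun \<nu>)"
  proof (rule k_mono[where s=1])
    fix \<theta> :: real assume "\<theta> \<in> {0<..}"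
    then have "\<forall>x\<le>A. 1 \<le> 1 * (1 - \<theta> * x)"
      using \<open>A < 0\<close> by (auto simp: mult_nonneg_nonpos)
    then show "\<exists>d>0. \<forall>x\<le>A. d \<le> 1 * (1 - \<theta> * x)" by (intro exI[of _ 1]) auto
  qed simp
  show "strict_mono_on {..<1 / A_sup \<nu>} (k_fun \<nu>)"
    unfolding A_def[symmetric]
  proof (rule k_mono[where s="-1"])
    fix \<theta> :: real assume "\<theta> \<in> {..<1 / A}"
    then have "\<theta> < 1 / A" by simp
    then have "1 < \<theta> * A" using neg_less_divide_eq[OF \<open>A < 0\<close>] by simp
    have "1 / A < 0" using \<open>A < 0\<close> by simp
    then have "\<theta> < 0" using \<open>\<theta> < 1 / A\<close> by linarith
    have "\<theta> * A \<le> \<theta> * x" if "x \<le> A" for x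
      using \<open>\<theta> < 0\<close> that by (simp add: mult_left_mono_neg)
    then show "\<exists>d>0. \<forall>x\<le>A. d \<le> -1 * (1 - \<theta> * x)"
      using \<open>1 < \<theta> * A\<close> by (intro exI[of _ "\<theta> * A - 1"]) auto
  qed (use \<open>A < 0\<close> in auto)
qed

end
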